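(* Let $m,N,N_0\in\mathbb{N}$, $A\in\mathbb{R}^{N\times N_0}$, $B\in\mathbb{R}^{m\times N}$ and $z\in\mathbb{R}^N$. Suppose $R=\{\alpha^q,\alpha^{q+1},\dots,\alpha^{q+r-1}\}\subset\mathbb{R}^{N_0}$ satisfies $|R|\geq N+1$, the sequence $(\alpha^k_1)_{k=q}^{q+r-1}$ is strictly decreasing, and $\alpha^k_j=0$ for all $j>1$ and all $k$. Then there exist $C\in\mathbb{R}^{m\times N_0}$, $v\in\mathbb{R}^m$ and a set $\mathcal{S}\subseteq R$ of the form $\mathcal{S}=\{\alpha^s,\alpha^{s+1},\dots,\alpha^{s+t-1}\}$ (consecutive indices) with $|\mathcal{S}|\geq |R|/(N+1)$ such that $B\rho(A\alpha+z)=C\alpha+v$ for all $\alpha\in\mathcal{S}$.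
   Context: $\rho(t)=\max\{0,t\}$, applied coordinatewise to vectors. *)

theory Defs
  imports Main Complex_Main
begin

text \<open>Vectors in R^n are represented as functions nat => real (coordinates 0..n-1,
  0-indexed); a k x n matrix is a function nat => nat => real (entries i<k, j<n).\<close>

definition relu :: "real \<Rightarrow> real" where
  "relu t = max 0 t"

definition mat_vec :: "nat \<Rightarrow> (nat \<Rightarrow> nat \<Rightarrow> real) \<Rightarrow> (nat \<Rightarrow> real) \<Rightarrow> (nat \<Rightarrow> real)" where
  "mat_vec n M x = (\<lambda>i. \<Sum>j<n. M i j * x j)"

end

theory Submission
  imports Defs
begin

text \<open>All inputs lie on a line, so along the sequence each neuron's pre-activation
  \<open>A l 0 * \<alpha>\<^sup>k\<^sub>1 + z l\<close> is monotone in \<open>k\<close> and its sign changes at most once.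
  The \<open>N\<close> neurons thus cut the \<open>r\<close> consecutive indices at most \<open>N\<close> times, leaving a run of
  at least \<open>r / (N + 1)\<close> consecutive indices with a fixed activation pattern; on it every
  ReLU is either the identity or zero, so the network is affine there.\<close>

lemma long_subinterval_avoiding:
  fixes D :: "nat set"
  assumes "finite D" "card D \<le> N" "D \<subseteq> {q<..<q+r}"
  shows "\<exists>s t. q \<le> s \<and> s + t \<le> q + r \<and> r \<le> t * (N + 1) \<and> D \<inter> {s<..<s+t} = {}"
  using assms
proof (induction N arbitrary: D r)
  case 0
  then show ?case by (intro exI[of _ q] exI[of _ r]) auto
next
  case (Suc N)
  show ?case
  proof (cases "D = {}")
    case True
    then show ?thesis by (intro exI[of _ q] exI[of _ r]) auto
  next
    case False
    define d where "d = Max D"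
    have "d \<in> D" and d_max: "\<And>x. x \<in> D \<Longrightarrow> x \<le> d"
      using Suc.prems False by (simp_all add: d_def)
    then have d_range: "q < d" "d < q + r" using Suc.prems by auto
    have "card (D - {d}) \<le> N" using Suc.prems \<open>d \<in> D\<close> by simp
    moreover have "D - {d} \<subseteq> {q<..<q+(d-q)}" using Suc.prems d_max d_range by force
    ultimately obtain s t where st: "q \<le> s" "s + t \<le> q + (d - q)" "d - q \<le> t * (N + 1)"
      "(D - {d}) \<inter> {s<..<s+t} = {}"
      using Suc.IH[of "D - {d}" "d - q"] Suc.prems(1) by blast
    show ?thesis
    proof (cases "r \<le> (q + r - d) * (Suc N + 1)")
      case True
      moreover have "D \<inter> {d<..<d + (q + r - d)} = {}" using d_max by fastforce
      ultimately show ?thesis using d_range by (intro exI[of _ d] exI[of _ "q + r - d"]) simp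
    next
      case False
      then have "r * (N + 2) < (d - q) * (N + 2) + r" using d_range
        by (simp add: diff_mult_distrib algebra_simps)
      then have "r * (N + 1) < (d - q) * (N + 2)" by (simp add: algebra_simps)
      also have "\<dots> \<le> t * (N + 1) * (N + 2)"
        using st(3) by (rule mult_le_mono1)
      finally have "r * (N + 1) < t * (N + 2) * (N + 1)" by (simp add: algebra_simps)
      then have "r \<le> t * (Suc N + 1)" by (simp only: mult_less_cancel2) simp
      moreover have "D \<inter> {s<..<s+t} = {}" using st(2,4) d_range by fastforce
      ultimately show ?thesis using st(1,2) d_range by (intro exI[of _ s] exI[of _ t]) simp
    qed
  qed
qed

definition change_points :: "nat \<Rightarrow> nat \<Rightarrow> (nat \<Rightarrow> 'a) \<Rightarrow> nat set" where
  "change_points q r f = {k \<in> {q<..<q+r}. f k \<noteq> f (k - 1)}"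

lemma change_points_subset: "change_points q r f \<subseteq> {q<..<q+r}"
  by (auto simp: change_points_def)

lemma constant_without_change_points:
  assumes "q \<le> s" "s + t \<le> q + r" "change_points q r f \<inter> {s<..<s+t} = {}"
    and "k \<in> {s..<s+t}"
  shows "f k = f s"
proof -
  obtain j where k: "k = s + j" "j < t"
    using assms(4) by (intro that[of "k - s"]) auto
  show ?thesis
    using k(2) unfolding k(1)
  proof (induction j)
    case (Suc j)
    then have "s + Suc j \<notin> change_points q r f" using assms(3) by auto
    then show ?case using Suc assms(1,2) by (simp add: change_points_def)
  qed simp
qed

lemma long_subinterval_without_change_points:
  assumes "\<And>l. l < N \<Longrightarrow> card (change_points q r (f l)) \<le> 1"
  shows "\<exists>s t. q \<le> s \<and> s + t \<le> q + r \<and> r \<le> t * (N + 1) \<and>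
    (\<forall>l<N. \<forall>k\<in>{s..<s+t}. f l k = f l s)"
proof -
  define D where "D = (\<Union>l<N. change_points q r (f l))"
  have "card D \<le> (\<Sum>l<N. card (change_points q r (f l)))"
    unfolding D_def by (rule card_UN_le) simp
  also have "\<dots> \<le> (\<Sum>l<N. 1)" using assms by (rule sum_mono) simp
  finally have "card D \<le> N" by simp
  moreover have "D \<subseteq> {q<..<q+r}" unfolding D_def using change_points_subset by blast
  moreover from this have "finite D" using finite_subset by blast
  ultimately obtain s t where st: "q \<le> s" "s + t \<le> q + r" "r \<le> t * (N + 1)"
    and "D \<inter> {s<..<s+t} = {}"
    using long_subinterval_avoiding by blast
  then have "change_points q r (f l) \<inter> {s<..<s+t} = {}" if "l < N" for l
    using that unfolding D_def by blast
  then have "\<forall>l<N. \<forall>k\<in>{s..<s+t}. f l k = f l s"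
    using constant_without_change_points[OF st(1,2)] by blast
  with st show ?thesis by blast
qed

lemma card_change_points_mono_le_1:
  fixes P :: "nat \<Rightarrow> bool"
  assumes "mono_on {q..<q+r} P"
  shows "card (change_points q r P) \<le> 1"
proof -
  have mono: "P i \<le> P j" if "q \<le> i" "i \<le> j" "j < q + r" for i j
    by (rule monotone_onD[OF assms]) (use that in auto)
  have not_less: "\<not> x < y" if "x \<in> change_points q r P" "y \<in> change_points q r P" for x y
  proof
    assume "x < y"
    from that have x: "q < x" "P x \<noteq> P (x - 1)" and y: "y < q + r" "P y \<noteq> P (y - 1)"
      by (simp_all add: change_points_def)
    have "P (x - 1) \<le> P x" using mono[of "x - 1" x] x(1) \<open>x < y\<close> y(1) by simp
    with x(2) have "P x" by auto
    moreover have "P (y - 1) \<le> P y" using mono[of "y - 1" y] x(1) \<open>x < y\<close> y(1) by simp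
    with y(2) have "\<not> P (y - 1)" by auto
    moreover have "P x \<le> P (y - 1)" using mono[of x "y - 1"] x(1) \<open>x < y\<close> y(1) by simp
    ultimately show False by simp
  qed
  have "\<forall>x\<in>change_points q r P. \<forall>y\<in>change_points q r P. x = y"
    using not_less by (blast intro: linorder_neqE_nat)
  moreover have "finite (change_points q r P)"
    by (rule finite_subset[OF change_points_subset]) simp
  ultimately show ?thesis using card_le_Suc0_iff_eq by (metis One_nat_def)
qed

lemma card_change_points_le_1:
  fixes P :: "nat \<Rightarrow> bool"
  assumes "mono_on {q..<q+r} P \<or> antimono_on {q..<q+r} P"
  shows "card (change_points q r P) \<le> 1"
  using assms
proof
  assume antimono: "antimono_on {q..<q+r} P"
  have "mono_on {q..<q+r} (\<lambda>k. \<not> P k)"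
  proof (rule monotone_onI)
    fix x y assume "x \<in> {q..<q+r}" "y \<in> {q..<q+r}" "x \<le> y"
    then have "P y \<le> P x" by (rule monotone_onD[OF antimono])
    then show "(\<not> P x) \<le> (\<not> P y)" by auto
  qed
  then have "card (change_points q r (\<lambda>k. \<not> P k)) \<le> 1"
    by (rule card_change_points_mono_le_1)
  moreover have "change_points q r (\<lambda>k. \<not> P k) = change_points q r P"
    by (auto simp: change_points_def)
  ultimately show ?thesis by simp
qed (rule card_change_points_mono_le_1)

lemma nonneg_affine_of_antimono_on:
  fixes x :: "'a::order \<Rightarrow> real"
  assumes "antimono_on S x"
  shows "mono_on S (\<lambda>k. 0 \<le> c * x k + d) \<or> antimono_on S (\<lambda>k. 0 \<le> c * x k + d)"
proof (cases "0 \<le> c")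
  case True
  have "antimono_on S (\<lambda>k. 0 \<le> c * x k + d)"
  proof (rule monotone_onI)
    fix k k' assume "k \<in> S" "k' \<in> S" "k \<le> k'"
    then have "x k' \<le> x k" by (rule monotone_onD[OF assms])
    then have "c * x k' \<le> c * x k" using True by (rule mult_left_mono)
    then show "(0 \<le> c * x k' + d) \<le> (0 \<le> c * x k + d)" by auto
  qed
  then show ?thesis ..
next
  case False
  have "mono_on S (\<lambda>k. 0 \<le> c * x k + d)"
  proof (rule monotone_onI)
    fix k k' assume "k \<in> S" "k' \<in> S" "k \<le> k'"
    then have "x k' \<le> x k" by (rule monotone_onD[OF assms])
    then have "c * x k \<le> c * x k'" using False by (simp add: mult_left_mono_neg)
    then show "(0 \<le> c * x k + d) \<le> (0 \<le> c * x k' + d)" by auto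
  qed
  then show ?thesis ..
qed

lemma mat_vec_supported_at_0:
  assumes "1 \<le> n" "\<And>j. 1 \<le> j \<Longrightarrow> j < n \<Longrightarrow> a j = 0"
  shows "mat_vec n M a i = M i 0 * a 0"
proof -
  have "mat_vec n M a i = M i 0 * a 0 + (\<Sum>j\<in>{..<n}-{0}. M i j * a j)"
    using assms(1) by (simp add: mat_vec_def sum.remove[of _ 0])
  also have "(\<Sum>j\<in>{..<n}-{0}. M i j * a j) = 0"
    using assms(2) by (intro sum.neutral) auto
  finally show ?thesis by simp
qed

lemma relu_layer_affine_on_common_pattern:
  assumes "\<And>a l. a \<in> X \<Longrightarrow> l < N \<Longrightarrow> 0 \<le> mat_vec n A a l + z l \<longleftrightarrow> \<sigma> l"
  shows "\<exists>C v. \<forall>a\<in>X. \<forall>i.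
    mat_vec N B (\<lambda>l. relu (mat_vec n A a l + z l)) i = mat_vec n C a i + v i"
proof (intro exI ballI allI)
  fix a i assume "a \<in> X"
  have "mat_vec N B (\<lambda>l. relu (mat_vec n A a l + z l)) i
      = (\<Sum>l<N. B i l * (if \<sigma> l then mat_vec n A a l + z l else 0))"
    unfolding mat_vec_def[of N] using assms[OF \<open>a \<in> X\<close>]
    by (intro sum.cong) (force simp: relu_def max_def)+
  also have "\<dots> = (\<Sum>l<N. (\<Sum>j<n. B i l * (if \<sigma> l then A l j else 0) * a j)
      + B i l * (if \<sigma> l then z l else 0))"
    by (intro sum.cong) (auto simp: mat_vec_def sum_distrib_left algebra_simps)
  also have "\<dots> = mat_vec n (\<lambda>i j. \<Sum>l<N. B i l * (if \<sigma> l then A l j else 0)) a i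
      + (\<lambda>i. \<Sum>l<N. B i l * (if \<sigma> l then z l else 0)) i"
    by (simp add: mat_vec_def sum.distrib sum_distrib_right sum.swap[of _ "{..<N}"])
  finally show "mat_vec N B (\<lambda>l. relu (mat_vec n A a l + z l)) i
      = mat_vec n (\<lambda>i j. \<Sum>l<N. B i l * (if \<sigma> l then A l j else 0)) a i
      + (\<lambda>i. \<Sum>l<N. B i l * (if \<sigma> l then z l else 0)) i" .
qed

lemma card_image_subinterval:
  assumes "inj_on (\<lambda>k. alpha k j) {q..<q+r}" "q \<le> s" "s + t \<le> q + r"
  shows "card (alpha ` {s..<s+t}) = t"
proof -
  have "{s..<s+t} \<subseteq> {q..<q+r}" using assms(2,3) by auto
  then have "inj_on ((\<lambda>a. a j) \<circ> alpha) {s..<s+t}"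
    using inj_on_subset[OF assms(1)] by (simp add: comp_def)
  then have "inj_on alpha {s..<s+t}" by (rule inj_on_imageI2)
  then show ?thesis by (simp add: card_image)
qed

theorem lemma5p5:
  fixes m N N0 q r :: nat
    and A B :: "nat \<Rightarrow> nat \<Rightarrow> real"
    and z :: "nat \<Rightarrow> real"
    and alpha :: "nat \<Rightarrow> nat \<Rightarrow> real"
  assumes "1 \<le> N0"
    and "card (alpha ` {q..<q+r}) \<ge> N + 1"
    and "\<And>k l. q \<le> k \<Longrightarrow> k < l \<Longrightarrow> l < q + r \<Longrightarrow> alpha l 0 < alpha k 0"
    and "\<And>k j. q \<le> k \<Longrightarrow> k < q + r \<Longrightarrow> 1 \<le> j \<Longrightarrow> j < N0 \<Longrightarrow> alpha k j = 0"
  shows "\<exists>C :: nat \<Rightarrow> nat \<Rightarrow> real. \<exists>v :: nat \<Rightarrow> real. \<exists>s t :: nat.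
           q \<le> s \<and> s + t \<le> q + r \<and>
           real (card (alpha ` {s..<s+t})) \<ge> real (card (alpha ` {q..<q+r})) / real (N + 1) \<and>
           (\<forall>a \<in> alpha ` {s..<s+t}. \<forall>i<m.
              mat_vec N B (\<lambda>l. relu (mat_vec N0 A a l + z l)) i = mat_vec N0 C a i + v i)"
proof -
  define P where "P l k \<longleftrightarrow> 0 \<le> A l 0 * alpha k 0 + z l" for l k
  have "strict_antimono_on {q..<q+r} (\<lambda>k. alpha k 0)"
    using assms(3) by (intro monotone_onI) auto
  then have antimono: "antimono_on {q..<q+r} (\<lambda>k. alpha k 0)"
    and inj: "inj_on (\<lambda>k. alpha k 0) {q..<q+r}"
    by (simp_all add: strict_antimono_iff_antimono)
  have "card (change_points q r (P l)) \<le> 1" for l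
    unfolding P_def by (intro card_change_points_le_1 nonneg_affine_of_antimono_on antimono)
  then have "\<exists>s t. q \<le> s \<and> s + t \<le> q + r \<and> r \<le> t * (N + 1) \<and>
      (\<forall>l<N. \<forall>k\<in>{s..<s+t}. P l k = P l s)"
    by (rule long_subinterval_without_change_points)
  then obtain s t where st: "q \<le> s" "s + t \<le> q + r" "r \<le> t * (N + 1)"
    and pattern_constant: "\<forall>l<N. \<forall>k\<in>{s..<s+t}. P l k = P l s"
    by blast
  have "0 \<le> mat_vec N0 A a l + z l \<longleftrightarrow> P l s"
    if a_in: "a \<in> alpha ` {s..<s+t}" and "l < N" for a l
  proof -
    obtain k where k: "k \<in> {s..<s+t}" "a = alpha k" using a_in by blast
    then have "mat_vec N0 A a l = A l 0 * alpha k 0"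
      using mat_vec_supported_at_0[OF assms(1)] assms(4) st(1,2) by simp
    moreover have "P l k = P l s" using pattern_constant k(1) \<open>l < N\<close> by blast
    ultimately show ?thesis by (simp add: P_def)
  qed
  then have affine: "\<exists>C v. \<forall>a\<in>alpha ` {s..<s+t}. \<forall>i.
      mat_vec N B (\<lambda>l. relu (mat_vec N0 A a l + z l)) i = mat_vec N0 C a i + v i"
    by (rule relu_layer_affine_on_common_pattern)
  have "card (alpha ` {q..<q+r}) = r" "card (alpha ` {s..<s+t}) = t"
    using card_image_subinterval[where alpha = alpha and j = 0, OF inj] st(1,2) by simp_all
  then have "real (card (alpha ` {q..<q+r})) / real (N + 1) \<le> real (card (alpha ` {s..<s+t}))"
    using of_nat_le_iff[of r "t * (N + 1)", THEN iffD2, OF st(3)]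
    by (simp add: divide_le_eq algebra_simps)
  with st(1,2) affine show ?thesis by blast
qed

end
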